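(* Let $q,W$ be positive integers and $a,b,h$ integers with $\gcd(W,b)=\gcd(q,a)=1$. Then $|R^\ast_{W,b}(q,a,h)|\le\gcd(h,q)$.
   Context: $e(z)=e^{2\pi iz}$. $R^\ast_{W,b}(q,a,h)=\sum_{1\le c\le qW,\ \gcd(c,q)=1,\ c\equiv b\ (\mathrm{mod}\ W)}e\big(\frac{ach}{qW}\big)$. Here $\gcd(0,q)=q$. *)

theory Defs
  imports "HOL-Analysis.Analysis" "HOL-Number_Theory.Cong"
begin

definition e :: "real \<Rightarrow> complex" where
  "e z = exp (2 * of_real pi * \<i> * of_real z)"

definition Rstar :: "int \<Rightarrow> int \<Rightarrow> int \<Rightarrow> int \<Rightarrow> int \<Rightarrow> complex" where
  "Rstar W b q a h =
     (\<Sum>c\<in>{c \<in> {1..q*W}. gcd c q = 1 \<and> [c = b] (mod W)}.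
        e (real_of_int (a * c * h) / real_of_int (q * W)))"

end

theory Submission
  imports Defs
begin

text \<open>
  Put S(q, b, W, A) = sum of e(A t / q) over 0 <= t < q with gcd(b + W t, q) = 1
  (\<open>coprime_exp_sum q b W A\<close> below).
  Writing c = b0 + W t with b0 the representative of b mod W in [1, W] shows
  R*_{W,b}(q,a,h) = e(a b0 h / (qW)) S(q, b0, W, a h), and gcd(a h, q) = gcd(h, q),
  so it suffices to prove |S(q, b, W, A)| <= gcd(A, q) for all b, W, A, by induction
  on q.  Split q = n p with p prime.  The coprimality condition modulo n is
  n-periodic in t, so summing it over t < n p gives p S(n, b, W, A / p) if p | A and
  0 otherwise.  If p | n or p | W, the additional condition that p does not divide
  b + W t is automatic, impossible, or constant.  Otherwise it excludes one residue
  class t = j mod p, whose contribution is e(A j / (n p)) S(n, b + W j, W p, A);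
  when p | A it equals S(n, b, W, A / p) because u |-> j + p u permutes the residues
  mod n.  So S(q, b, W, A) is either minus that contribution (p not dividing A) or
  (p - 1) S(n, b, W, A / p).
\<close>

lemma e_add: "e (x + y) = e x * e y"
  unfolding e_def by (simp add: distrib_left exp_add)

lemma e_of_int [simp]: "e (of_int k) = 1"
proof -
  have "e (of_int k) = exp ((2 * of_int k * pi) * \<i>)"
    unfolding e_def by (simp add: ac_simps)
  also have "\<dots> = 1"
    by (rule exp_integer_2pi) simp
  finally show ?thesis .
qed

lemma e_add_of_int [simp]: "e (x + of_int k) = e x"
  by (simp add: e_add)

lemma norm_e [simp]: "norm (e x) = 1"
  unfolding e_def by (simp add: norm_exp_eq_Re)

lemma e_power: "e x ^ n = e (of_nat n * x)"
  unfolding e_def by (simp add: exp_of_nat_mult[symmetric] ac_simps)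

lemma e_eq_1_imp_Ints:
  assumes "e x = 1"
  shows "x \<in> \<int>"
proof -
  from assms have "exp (complex_of_real (2 * pi * x) * \<i>) = 1"
    unfolding e_def by (simp add: ac_simps)
  then obtain k :: int where "Im (complex_of_real (2 * pi * x) * \<i>) = of_int (2 * k) * pi"
    unfolding exp_eq_1 by blast
  then have "x = of_int k"
    by simp
  then show ?thesis
    by simp
qed

definition exp_sum :: "nat \<Rightarrow> (nat \<Rightarrow> complex) \<Rightarrow> int \<Rightarrow> complex" where
  "exp_sum n c A = (\<Sum>t<n. c t * e (of_int A * of_nat t / of_nat n))"

lemma exp_sum_const_1:
  assumes "p > 0"
  shows "exp_sum p (\<lambda>_. 1) A = (if int p dvd A then of_nat p else 0)"
proof (cases "int p dvd A")
  case True
  then obtain k where A: "A = int p * k" ..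
  have "e (of_int A * of_nat s / of_nat p) = 1" for s
  proof -
    have "of_int A * of_nat s / of_nat p = (of_int (k * int s) :: real)"
      using assms by (simp add: A)
    then show ?thesis
      by (metis e_of_int)
  qed
  then show ?thesis
    using True by (simp add: exp_sum_def)
next
  case False
  define z where "z = e (of_int A / of_nat p)"
  have powers: "e (of_int A * of_nat s / of_nat p) = z ^ s" for s
    unfolding z_def e_power by (simp add: field_simps)
  have "z \<noteq> 1"
  proof
    assume "z = 1"
    then have "(of_int A / of_nat p :: real) \<in> \<int>"
      unfolding z_def by (rule e_eq_1_imp_Ints)
    then obtain k where "(of_int A / of_nat p :: real) = of_int k"
      by (auto elim: Ints_cases)
    then have "(of_int A :: real) = of_int (int p * k)"
      using assms by (simp add: field_simps)
    then have "A = int p * k"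
      by linarith
    with False show False
      by simp
  qed
  moreover have "z ^ p = 1"
    using powers[of p] assms by simp
  ultimately show ?thesis
    using False by (simp add: exp_sum_def powers geometric_sum)
qed

lemma sum_lessThan_mult:
  fixes g :: "nat \<Rightarrow> 'a::comm_monoid_add"
  shows "(\<Sum>t<n * p. g t) = (\<Sum>s<p. \<Sum>r<n. g (r + n * s))"
proof -
  have "(\<Sum>t<n * p. g t) = (\<Sum>s<p. sum g {s * n..<s * n + n})"
    using sum.nat_group[of g n p] by (simp add: mult.commute)
  also have "\<dots> = (\<Sum>s<p. \<Sum>r<n. g (r + n * s))"
    by (simp add: sum.atLeastLessThan_shift_0 atLeast0LessThan ac_simps)
  finally show ?thesis .
qed

lemma periodic_add_mult:
  fixes f :: "nat \<Rightarrow> 'a"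
  assumes "\<And>t. f (t + n) = f t"
  shows "f (t + n * s) = f t"
proof (induction s)
  case (Suc s)
  have "f (t + n * Suc s) = f ((t + n * s) + n)"
    by (simp add: algebra_simps)
  then show ?case
    using assms Suc by simp
qed simp

lemma periodic_mod:
  fixes f :: "nat \<Rightarrow> 'a"
  assumes "\<And>t. f (t + n) = f t"
  shows "f (t mod n) = f t"
  using periodic_add_mult[of f n "t mod n" "t div n", OF assms] by (metis mod_mult_div_eq)

lemma exp_sum_mult_periodic:
  assumes periodic: "\<And>t. c (t + n) = c t" and "n > 0" and "p > 0"
  shows "exp_sum (n * p) c A =
    (if int p dvd A then of_nat p * exp_sum n c (A div int p) else 0)"
proof -
  have "exp_sum (n * p) c A =
      (\<Sum>s<p. \<Sum>r<n. c r * e (of_int A * of_nat r / of_nat (n * p)) * e (of_int A * of_nat s / of_nat p))"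
    unfolding exp_sum_def sum_lessThan_mult
  proof (intro sum.cong refl)
    fix s r
    have "of_int A * of_nat (r + n * s) / of_nat (n * p) =
        of_int A * of_nat r / of_nat (n * p) + (of_int A * of_nat s / of_nat p :: real)"
      using assms by (simp add: field_simps)
    then show "c (r + n * s) * e (of_int A * of_nat (r + n * s) / of_nat (n * p)) =
        c r * e (of_int A * of_nat r / of_nat (n * p)) * e (of_int A * of_nat s / of_nat p)"
      by (simp add: e_add periodic_add_mult[of c, OF periodic])
  qed
  also have "\<dots> = (\<Sum>r<n. c r * e (of_int A * of_nat r / of_nat (n * p))) * exp_sum p (\<lambda>_. 1) A"
    unfolding exp_sum_def by (subst sum_product) (simp add: sum.swap[of _ "{..<p}"])
  also have "\<dots> = (if int p dvd A then of_nat p * exp_sum n c (A div int p) else 0)"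
  proof (cases "int p dvd A")
    case True
    then obtain k where "A = int p * k" ..
    then have "of_int A * of_nat r / of_nat (n * p) = (of_int (A div int p) * of_nat r / of_nat n :: real)" for r
      using assms by (simp add: field_simps)
    then have "(\<Sum>r<n. c r * e (of_int A * of_nat r / of_nat (n * p))) = exp_sum n c (A div int p)"
      by (simp add: exp_sum_def)
    then show ?thesis
      using True \<open>p > 0\<close> by (simp add: exp_sum_const_1)
  qed (use \<open>p > 0\<close> in \<open>simp add: exp_sum_const_1\<close>)
  finally show ?thesis .
qed

lemma sum_periodic_progression:
  fixes f :: "nat \<Rightarrow> 'a::comm_monoid_add"
  assumes periodic: "\<And>t. f (t + n) = f t" and "n > 0" and "coprime p n"
  shows "(\<Sum>u<n. f (j + p * u)) = (\<Sum>r<n. f r)"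
proof -
  define h where "h u = (j + p * u) mod n" for u
  have "inj_on h {..<n}"
  proof (rule inj_onI)
    fix u v
    assume "u \<in> {..<n}" "v \<in> {..<n}" "h u = h v"
    moreover from \<open>h u = h v\<close> have "[p * u = p * v] (mod n)"
      unfolding h_def cong_def[symmetric] by (simp add: cong_add_lcancel_nat)
    then have "[u = v] (mod n)"
      using \<open>coprime p n\<close> by (simp add: cong_mult_lcancel_nat)
    ultimately show "u = v"
      by (simp add: cong_def)
  qed
  moreover have "h ` {..<n} \<subseteq> {..<n}"
    using \<open>n > 0\<close> by (auto simp: h_def)
  ultimately have "bij_betw h {..<n} {..<n}"
    by (simp add: bij_betw_def endo_inj_surj)
  then have "(\<Sum>u<n. f (h u)) = (\<Sum>r<n. f r)"
    by (rule sum.reindex_bij_betw)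
  then show ?thesis
    by (simp add: h_def periodic_mod[of f, OF periodic])
qed

lemma sum_lessThan_mult_mod_eq:
  fixes g :: "nat \<Rightarrow> 'a::comm_monoid_add"
  assumes "j < p"
  shows "(\<Sum>t<n * p. if t mod p = j then g t else 0) = (\<Sum>u<n. g (j + p * u))"
proof -
  have "(\<Sum>t<n * p. if t mod p = j then g t else 0) =
      (\<Sum>u<n. \<Sum>r<p. if (r + p * u) mod p = j then g (r + p * u) else 0)"
    by (subst mult.commute) (rule sum_lessThan_mult)
  also have "\<dots> = (\<Sum>u<n. \<Sum>r<p. if r = j then g (j + p * u) else 0)"
    by (intro sum.cong refl) auto
  also have "\<dots> = (\<Sum>u<n. g (j + p * u))"
    using assms by simp
  finally show ?thesis .
qed

lemma coprime_prime_right_iff: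
  fixes a p :: int
  assumes "prime p"
  shows "coprime a p \<longleftrightarrow> \<not> p dvd a"
proof
  assume "coprime a p"
  then show "\<not> p dvd a"
    using assms by (metis coprime_common_divisor dvd_refl not_prime_unit)
next
  assume "\<not> p dvd a"
  then show "coprime a p"
    using assms prime_imp_coprime coprime_commute by blast
qed

lemma coprime_add_mult_self_right_iff:
  fixes a k m :: int
  shows "coprime (a + k * m) m \<longleftrightarrow> coprime a m"
  by (metis coprime_iff_gcd_eq_1 gcd.commute gcd_add_mult add.commute)

lemma prime_dvd_add_mult_iff_mod_eq:
  assumes "prime p" and "\<not> int p dvd W" and "int p dvd b + W * int j" and "j < p"
  shows "int p dvd b + W * int t \<longleftrightarrow> t mod p = j"
proof -
  have "int p dvd b + W * int t \<longleftrightarrow> int p dvd (b + W * int t) - (b + W * int j)"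
    using assms(3) by (metis dvd_diff dvd_add_left_iff diff_add_cancel)
  also have "\<dots> \<longleftrightarrow> int p dvd W * (int t - int j)"
    by (simp add: algebra_simps)
  also have "\<dots> \<longleftrightarrow> [t = j] (mod p)"
    using assms(1,2) by (simp add: prime_dvd_mult_iff cong_iff_dvd_diff flip: cong_int_iff)
  also have "\<dots> \<longleftrightarrow> t mod p = j"
    using assms(4) by (simp add: cong_def)
  finally show ?thesis .
qed

lemma prime_dvd_add_mult_solvable:
  assumes "prime p" and "\<not> int p dvd W"
  obtains j where "j < p" and "int p dvd b + W * int j"
proof -
  have "coprime W (int p)"
    using assms by (simp add: coprime_prime_right_iff)
  then obtain x where x: "[W * x = 1] (mod int p)"
    using cong_solve_coprime_int by blast
  define j where "j = nat ((- b * x) mod int p)"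
  have p: "int p > 0"
    using assms(1) prime_gt_0_nat by simp
  then have "int j = (- b * x) mod int p"
    by (simp add: j_def)
  then have "[b + W * int j = b + (W * x) * (- b)] (mod int p)"
    by (metis cong_add_lcancel cong_mod_left cong_refl cong_scalar_left mult.assoc mult.commute)
  also have "[b + (W * x) * (- b) = b + 1 * (- b)] (mod int p)"
    using x by (intro cong_add cong_mult) auto
  finally have "int p dvd b + W * int j"
    by (simp add: cong_0_iff)
  moreover have "j < p"
    using p by (simp add: j_def nat_less_iff)
  ultimately show ?thesis
    using that by blast
qed

definition coprime_weight :: "int \<Rightarrow> int \<Rightarrow> nat \<Rightarrow> nat \<Rightarrow> complex" where
  "coprime_weight b W n t = (if coprime (b + W * int t) (int n) then 1 else 0)"

abbreviation coprime_exp_sum :: "nat \<Rightarrow> int \<Rightarrow> int \<Rightarrow> int \<Rightarrow> complex" where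
  "coprime_exp_sum q b W A \<equiv> exp_sum q (coprime_weight b W q) A"

lemma coprime_weight_periodic: "coprime_weight b W n (t + n) = coprime_weight b W n t"
proof -
  have "b + W * int (t + n) = (b + W * int t) + W * int n"
    by (simp add: algebra_simps)
  then show ?thesis
    by (simp only: coprime_weight_def coprime_add_mult_self_right_iff)
qed

lemma coprime_weight_mult_prime:
  assumes "prime p"
  shows "coprime_weight b W (n * p) t =
    (if int p dvd b + W * int t then 0 else coprime_weight b W n t)"
proof -
  have "prime (int p)"
    using assms by simp
  then show ?thesis
    by (simp add: coprime_weight_def coprime_prime_right_iff)
qed

lemma coprime_weight_mult_dvd:
  assumes "p dvd n"
  shows "coprime_weight b W (n * p) = coprime_weight b W n"
proof -
  have "coprime x (int p)" if "coprime x (int n)" for x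
    using coprime_divisors[of x x "int p" "int n"] that assms by simp
  then show ?thesis
    by (auto simp: coprime_weight_def fun_eq_iff)
qed

lemma coprime_exp_sum_mult_prime_dvd_modulus:
  assumes "prime p" and "int p dvd W"
  shows "coprime_exp_sum (n * p) b W A =
    (if int p dvd b then 0 else exp_sum (n * p) (coprime_weight b W n) A)"
  using assms by (simp add: exp_sum_def coprime_weight_mult_prime dvd_add_left_iff)

lemma gcd_mult_common_factor_int: "gcd (int p * k) (int n * int p) = int p * gcd k (int n)"
  using gcd_mult_distrib_int[of "int p" k "int n"] by (simp add: ac_simps)

lemma norm_exp_sum_coprime_weight_mult_le:
  assumes IH: "\<And>A. norm (coprime_exp_sum n b W A) \<le> of_int (gcd A (int n))"
    and "n > 0" and "p > 0"
  shows "norm (exp_sum (n * p) (coprime_weight b W n) A) \<le> of_int (gcd A (int (n * p)))"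
proof (cases "int p dvd A")
  case True
  then obtain k where A: "A = int p * k" ..
  have "norm (exp_sum (n * p) (coprime_weight b W n) A) = of_nat p * norm (coprime_exp_sum n b W k)"
    using assms A by (simp add: exp_sum_mult_periodic coprime_weight_periodic norm_mult)
  also have "\<dots> \<le> of_nat p * of_int (gcd k (int n))"
    using IH by (intro mult_left_mono) auto
  also have "\<dots> = of_int (gcd A (int (n * p)))"
    by (simp add: A gcd_mult_common_factor_int)
  finally show ?thesis .
qed (use assms in \<open>simp add: exp_sum_mult_periodic coprime_weight_periodic\<close>)

lemma coprime_exp_sum_mult_prime_eq:
  assumes "prime p" and "\<not> int p dvd W" and "int p dvd b + W * int j" and "j < p"
  shows "coprime_exp_sum (n * p) b W A = exp_sum (n * p) (coprime_weight b W n) A -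
    (\<Sum>u<n. coprime_weight b W n (j + p * u) * e (of_int A * of_nat (j + p * u) / of_nat (n * p)))"
proof -
  define E where "E t = e (of_int A * of_nat t / of_nat (n * p))" for t
  have exp_sum_E: "exp_sum (n * p) c A = (\<Sum>t<n * p. c t * E t)" for c
    unfolding exp_sum_def E_def ..
  have "coprime_weight b W (n * p) t * E t =
      coprime_weight b W n t * E t - (if t mod p = j then coprime_weight b W n t * E t else 0)" for t
    using assms by (simp add: coprime_weight_mult_prime prime_dvd_add_mult_iff_mod_eq)
  then have "coprime_exp_sum (n * p) b W A = exp_sum (n * p) (coprime_weight b W n) A -
      (\<Sum>t<n * p. if t mod p = j then coprime_weight b W n t * E t else 0)"
    by (simp add: exp_sum_E sum_subtractf)
  then show ?thesis
    using assms(4) by (simp add: sum_lessThan_mult_mod_eq E_def)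
qed

lemma sum_coprime_weight_progression:
  assumes "n > 0" and "p > 0"
  shows "(\<Sum>u<n. coprime_weight b W n (j + p * u) * e (of_int A * of_nat (j + p * u) / of_nat (n * p))) =
    e (of_int A * of_nat j / of_nat (n * p)) * coprime_exp_sum n (b + W * int j) (W * int p) A"
proof -
  have "coprime_weight b W n (j + p * u) = coprime_weight (b + W * int j) (W * int p) n u" for u
    by (simp add: coprime_weight_def algebra_simps)
  moreover have "e (of_int A * of_nat (j + p * u) / of_nat (n * p)) =
      e (of_int A * of_nat j / of_nat (n * p)) * e (of_int A * of_nat u / of_nat n)" for u
  proof -
    have "of_int A * of_nat (j + p * u) / of_nat (n * p) =
        of_int A * of_nat j / of_nat (n * p) + (of_int A * of_nat u / of_nat n :: real)"
      using assms by (simp add: field_simps)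
    then show ?thesis
      by (simp only: e_add)
  qed
  ultimately show ?thesis
    by (simp add: exp_sum_def sum_distrib_left ac_simps)
qed

lemma sum_coprime_weight_progression_dvd:
  assumes "n > 0" and "p > 0" and "coprime p n"
  shows "(\<Sum>u<n. coprime_weight b W n (j + p * u) *
      e (of_int (int p * k) * of_nat (j + p * u) / of_nat (n * p))) = coprime_exp_sum n b W k"
proof -
  define f where "f t = coprime_weight b W n t * e (of_int k * of_nat t / of_nat n)" for t
  have "f (t + n) = f t" for t
  proof -
    have "of_int k * of_nat (t + n) / of_nat n = of_int k * of_nat t / of_nat n + (of_int k :: real)"
      using assms by (simp add: field_simps)
    then show ?thesis
      by (simp add: f_def coprime_weight_periodic)
  qed
  moreover have "of_int (int p * k) * of_nat t / of_nat (n * p) = (of_int k * of_nat t / of_nat n :: real)" for t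
    using assms by (simp add: field_simps)
  ultimately show ?thesis
    using sum_periodic_progression[of f n p j] assms by (simp add: f_def exp_sum_def)
qed

lemma coprime_exp_sum_mult_new_prime_dvd:
  assumes "prime p" and "\<not> p dvd n" and "\<not> int p dvd W" and "n > 0"
  shows "coprime_exp_sum (n * p) b W (int p * k) = of_nat (p - 1) * coprime_exp_sum n b W k"
proof -
  have "p > 0"
    using assms(1) prime_gt_0_nat by blast
  obtain j where j: "j < p" "int p dvd b + W * int j"
    using prime_dvd_add_mult_solvable[OF assms(1,3)] .
  have "coprime p n"
    using assms(1,2) by (rule prime_imp_coprime)
  then have "coprime_exp_sum (n * p) b W (int p * k) =
      exp_sum (n * p) (coprime_weight b W n) (int p * k) - coprime_exp_sum n b W k"
    using coprime_exp_sum_mult_prime_eq[OF assms(1,3) j(2,1)] \<open>n > 0\<close> \<open>p > 0\<close>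
    by (simp only: sum_coprime_weight_progression_dvd)
  also have "\<dots> = of_nat p * coprime_exp_sum n b W k - coprime_exp_sum n b W k"
    using \<open>n > 0\<close> \<open>p > 0\<close> by (simp add: exp_sum_mult_periodic coprime_weight_periodic)
  also have "\<dots> = of_nat (p - 1) * coprime_exp_sum n b W k"
    using \<open>p > 0\<close> by (simp add: of_nat_diff Suc_le_eq algebra_simps)
  finally show ?thesis .
qed

lemma coprime_exp_sum_mult_new_prime_not_dvd:
  assumes "prime p" and "\<not> int p dvd W" and "int p dvd b + W * int j" and "j < p"
    and "\<not> int p dvd A" and "n > 0"
  shows "coprime_exp_sum (n * p) b W A =
    - e (of_int A * of_nat j / of_nat (n * p)) * coprime_exp_sum n (b + W * int j) (W * int p) A"
proof -
  have "p > 0"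
    using assms(1) prime_gt_0_nat by blast
  then have "exp_sum (n * p) (coprime_weight b W n) A = 0"
    using assms(5,6) by (simp add: exp_sum_mult_periodic coprime_weight_periodic)
  then show ?thesis
    using coprime_exp_sum_mult_prime_eq[OF assms(1-4)]
    by (simp only: sum_coprime_weight_progression[OF \<open>n > 0\<close> \<open>p > 0\<close>] diff_0 mult_minus_left)
qed

lemma norm_coprime_exp_sum_mult_new_prime_le:
  assumes IH: "\<And>b W A. norm (coprime_exp_sum n b W A) \<le> of_int (gcd A (int n))"
    and p: "prime p" and "\<not> p dvd n" and "\<not> int p dvd W" and "n > 0"
  shows "norm (coprime_exp_sum (n * p) b W A) \<le> of_int (gcd A (int (n * p)))"
proof (cases "int p dvd A")
  case False
  obtain j where j: "j < p" "int p dvd b + W * int j"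
    using prime_dvd_add_mult_solvable[OF p \<open>\<not> int p dvd W\<close>] .
  have "norm (coprime_exp_sum (n * p) b W A) = norm (coprime_exp_sum n (b + W * int j) (W * int p) A)"
    using coprime_exp_sum_mult_new_prime_not_dvd[OF p \<open>\<not> int p dvd W\<close> j(2,1) False \<open>n > 0\<close>]
    by (simp add: norm_mult)
  also have "\<dots> \<le> of_int (gcd A (int n))"
    by (rule IH)
  also have "gcd A (int n) = gcd A (int (n * p))"
    using False p by (simp add: gcd_mult_right_right_cancel coprime_prime_right_iff)
  finally show ?thesis .
next
  case True
  then obtain k where A: "A = int p * k" ..
  have "norm (coprime_exp_sum (n * p) b W A) = real (p - 1) * norm (coprime_exp_sum n b W k)"
    using coprime_exp_sum_mult_new_prime_dvd[OF p assms(3-5)] by (simp add: A norm_mult)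
  also have "\<dots> \<le> real p * of_int (gcd k (int n))"
    using IH by (intro mult_mono) auto
  also have "\<dots> = of_int (gcd A (int (n * p)))"
    by (simp add: A gcd_mult_common_factor_int)
  finally show ?thesis .
qed

lemma norm_coprime_exp_sum_mult_prime_le:
  assumes IH: "\<And>b W A. norm (coprime_exp_sum n b W A) \<le> of_int (gcd A (int n))"
    and p: "prime p" and "n > 0"
  shows "norm (coprime_exp_sum (n * p) b W A) \<le> of_int (gcd A (int (n * p)))"
proof -
  have S1: "norm (exp_sum (n * p) (coprime_weight b W n) A) \<le> of_int (gcd A (int (n * p)))"
    using IH \<open>n > 0\<close> prime_gt_0_nat[OF p] by (rule norm_exp_sum_coprime_weight_mult_le)
  consider "p dvd n" | "int p dvd W" | "\<not> p dvd n" "\<not> int p dvd W"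
    by blast
  then show ?thesis
  proof cases
    case 1
    then show ?thesis
      using S1 by (simp add: coprime_weight_mult_dvd)
  next
    case 2
    then show ?thesis
      using S1 p by (simp add: coprime_exp_sum_mult_prime_dvd_modulus)
  next
    case 3
    then show ?thesis
      by (rule norm_coprime_exp_sum_mult_new_prime_le[OF IH p _ _ \<open>n > 0\<close>])
  qed
qed

lemma norm_coprime_exp_sum_le:
  assumes "q > 0"
  shows "norm (coprime_exp_sum q b W A) \<le> of_int (gcd A (int q))"
  using assms
proof (induction q arbitrary: b W A rule: less_induct)
  case (less q)
  show ?case
  proof (cases "q = 1")
    case True
    then show ?thesis
      by (simp add: exp_sum_def coprime_weight_def)
  next
    case False
    then obtain p where p: "prime p" "p dvd q"
      using prime_factor_nat by blast
    then obtain n where q: "q = n * p"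
      by (metis dvd_def mult.commute)
    with less.prems p have "n > 0" "n < q"
      using prime_gt_1_nat by auto
    then show ?thesis
      using less.IH norm_coprime_exp_sum_mult_prime_le[OF _ p(1)] q by blast
  qed
qed

lemma residue_class_interval_eq_image:
  fixes b b0 W q :: int
  assumes b0: "1 \<le> b0" "b0 \<le> W" and b0_cong: "[b0 = b] (mod W)"
  shows "{c \<in> {1..q * W}. [c = b] (mod W)} = (\<lambda>t. b0 + W * int t) ` {..<nat q}"
proof -
  have "W > 0"
    using b0 by simp
  show ?thesis
  proof (intro set_eqI iffI)
    fix c
    assume "c \<in> {c \<in> {1..q * W}. [c = b] (mod W)}"
    then have c: "1 \<le> c" "c \<le> q * W" and "[c = b] (mod W)"
      by auto
    then have "[c = b0] (mod W)"
      using b0_cong by (metis cong_sym cong_trans)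
    then have "W dvd c - b0"
      by (simp add: cong_iff_dvd_diff)
    then obtain k where k: "c = b0 + W * k"
      by (metis dvdE diff_add_cancel add.commute)
    have "W * (- 1) < W * k"
      using c(1) b0(2) k by linarith
    moreover have "W * k < W * q"
      using c(2) b0(1) k mult.commute[of q W] by linarith
    ultimately have "- 1 < k" "k < q"
      by (simp_all only: mult_less_cancel_left_pos[OF \<open>W > 0\<close>])
    then show "c \<in> (\<lambda>t. b0 + W * int t) ` {..<nat q}"
      using k by (intro image_eqI[of _ _ "nat k"]) auto
  next
    fix c
    assume "c \<in> (\<lambda>t. b0 + W * int t) ` {..<nat q}"
    then obtain t where "t < nat q" and c: "c = b0 + W * int t"
      by blast
    then have t: "int t \<le> q - 1"
      by linarith
    have "0 \<le> W * int t" "W * int t \<le> W * (q - 1)"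
      using \<open>W > 0\<close> t by (auto intro: mult_left_mono)
    then have "1 \<le> c" "c \<le> q * W"
      using b0 c right_diff_distrib[of W q 1] mult.commute[of q W] by linarith+
    moreover have "[c = b] (mod W)"
      using b0_cong c by (simp add: cong_def)
    ultimately show "c \<in> {c \<in> {1..q * W}. [c = b] (mod W)}"
      by simp
  qed
qed

lemma cong_representative_in_interval:
  fixes b W :: int
  assumes "W > 0"
  obtains b0 where "1 \<le> b0" and "b0 \<le> W" and "[b0 = b] (mod W)"
proof
  show "1 \<le> (b - 1) mod W + 1" and "(b - 1) mod W + 1 \<le> W"
    using pos_mod_sign[OF assms, of "b - 1"] pos_mod_bound[OF assms, of "b - 1"] by linarith+
  show "[(b - 1) mod W + 1 = b] (mod W)"
    by (simp add: cong_def mod_add_left_eq)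
qed

lemma Rstar_eq_coprime_exp_sum:
  fixes q W a b b0 h :: int
  assumes "q > 0" and b0: "1 \<le> b0" "b0 \<le> W" and b0_cong: "[b0 = b] (mod W)"
  shows "Rstar W b q a h =
    e (of_int (a * b0 * h) / of_int (q * W)) * coprime_exp_sum (nat q) b0 W (a * h)"
proof -
  define \<phi> where "\<phi> t = b0 + W * int t" for t
  define E where "E = e (of_int (a * b0 * h) / of_int (q * W))"
  have "{c \<in> {1..q * W}. gcd c q = 1 \<and> [c = b] (mod W)} =
      {c \<in> {c \<in> {1..q * W}. [c = b] (mod W)}. coprime c q}"
    by (auto simp: coprime_iff_gcd_eq_1)
  also have "\<dots> = {c \<in> \<phi> ` {..<nat q}. coprime c q}"
    using residue_class_interval_eq_image[OF b0 b0_cong] by (simp add: \<phi>_def)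
  finally have indices: "{c \<in> {1..q * W}. gcd c q = 1 \<and> [c = b] (mod W)} =
      \<phi> ` {t \<in> {..<nat q}. coprime (\<phi> t) q}"
    by auto
  have "inj \<phi>"
    using b0 by (auto simp: inj_def \<phi>_def)
  have summand: "e (of_int (a * \<phi> t * h) / of_int (q * W)) =
      E * e (of_int (a * h) * of_nat t / of_nat (nat q))" for t
  proof -
    have "real_of_int (a * \<phi> t * h) / of_int (q * W) =
        of_int (a * b0 * h) / of_int (q * W) + of_int (a * h) * of_nat t / of_nat (nat q)"
      using assms by (simp add: \<phi>_def field_simps)
    then show ?thesis
      by (simp add: E_def e_add)
  qed
  have "Rstar W b q a h =
      (\<Sum>t \<in> {t \<in> {..<nat q}. coprime (\<phi> t) q}. e (of_int (a * \<phi> t * h) / of_int (q * W)))"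
    unfolding Rstar_def indices using \<open>inj \<phi>\<close> by (simp add: sum.reindex inj_on_subset[of \<phi>])
  also have "\<dots> =
      (\<Sum>t<nat q. if coprime (\<phi> t) q then e (of_int (a * \<phi> t * h) / of_int (q * W)) else 0)"
    by (rule sum.inter_filter) simp
  also have "\<dots> =
      (\<Sum>t<nat q. E * (coprime_weight b0 W (nat q) t * e (of_int (a * h) * of_nat t / of_nat (nat q))))"
    using \<open>q > 0\<close>
    by (intro sum.cong refl) (simp only: summand, simp add: coprime_weight_def \<phi>_def)
  also have "\<dots> = E * coprime_exp_sum (nat q) b0 W (a * h)"
    by (simp add: exp_sum_def sum_distrib_left)
  finally show ?thesis
    by (simp add: E_def)
qed

theorem lemma2p11:
  fixes q W a b h :: int
  assumes "q > 0" and "W > 0"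
    and "gcd W b = 1" and "gcd q a = 1"
  shows "norm (Rstar W b q a h) \<le> real_of_int (gcd h q)"
proof -
  obtain b0 where b0: "1 \<le> b0" "b0 \<le> W" "[b0 = b] (mod W)"
    using cong_representative_in_interval[OF assms(2)] .
  have "norm (Rstar W b q a h) = norm (coprime_exp_sum (nat q) b0 W (a * h))"
    using Rstar_eq_coprime_exp_sum[OF assms(1) b0] by (simp add: norm_mult)
  also have "\<dots> \<le> of_int (gcd (a * h) q)"
    using norm_coprime_exp_sum_le[of "nat q"] assms(1) by simp
  also have "gcd (a * h) q = gcd h q"
    using assms(4) by (metis coprime_iff_gcd_eq_1 gcd.commute gcd_mult_left_left_cancel)
  finally show ?thesis .
qed

end
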